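(* Let $n\ge 1$ and consider the hydrodynamic type system $F^i = u^i_t - V^i_j(u)u^j_x=0$, $i=1,\dots,n$, where $u^i=u^i(t,x)$ and the $V^i_j$ are smooth functions of $u=(u^1,\dots,u^n)$. Let $A$ be a local first-order homogeneous Hamiltonian operator, written in odd variables as $A(\mathbf p)^i = g^{ij}(u)p_{j,x} + \Gamma^{ij}_k(u)u^k_x p_j$, with $\det(g^{ij})\neq 0$ and satisfying the Hamiltonian conditions $$g^{ij}=g^{ji},\quad g^{ij}_{,k}=\Gamma^{ij}_k+\Gamma^{ji}_k,\quad g^{ik}\Gamma^{jl}_k=g^{jk}\Gamma^{il}_k,\quad \Gamma^{ij}_{l,k}-\Gamma^{ij}_{k,l}+\Gamma^i_{ks}\Gamma^{sj}_l-\Gamma^j_{ks}\Gamma^{si}_l=0,$$ where $\Gamma^i_{jk}=-g_{js}\Gamma^{si}_k$ and $(g_{ij})$ is the inverse matrix of $(g^{ij})$. Then the equation $\ell_F(A(\mathbf p))=0$ on the cotangent covering holds if and only if, identically in $u$ and for all values of the free indices, the following equations hold: $$V^i_kg^{kj}-V^j_kg^{ki}=0,$$ $$g^{ij}_{,k}V^k_m+g^{ik}(V^j_{k,m}-V^j_{m,k})+g^{ik}V^j_{k,m}+\Gamma^{ik}_mV^j_k-V^i_{m,k}g^{kj}-V^i_kg^{kj}_{,m}-V^i_k\Gamma^{kj}_m=0,$$ $$g^{ik}\left(V^j_{k,h}-V^j_{h,k}\right)+\Gamma^{ij}_kV^k_h-\Gamma^{kj}_hV^i_k=0,$$ $$\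begin{aligned}&g^{ik}\left(V^j_{k,ml}+V^j_{k,lm}-V^j_{m,kl}-V^j_{l,km}\right)+\Gamma^{ij}_{m,k}V^k_l+\Gamma^{ij}_{l,k}V^k_m+\Gamma^{ij}_kV^k_{l,m}+\Gamma^{ij}_kV^k_{m,l}\\&+\Gamma^{ik}_lV^j_{k,m}+\Gamma^{ik}_mV^j_{k,l}-\Gamma^{ik}_lV^j_{m,k}-\Gamma^{ik}_mV^j_{l,k}-\Gamma^{kj}_mV^i_{l,k}-\Gamma^{kj}_lV^i_{m,k}-\Gamma^{kj}_{m,l}V^i_k-\Gamma^{kj}_{l,m}V^i_k=0.\end{aligned}$$
   Context: Summation over repeated indices is understood. An index after a comma denotes partial derivative with respect to the corresponding field variable: $V^j_{k,m}=\partial V^j_k/\partial u^m$, $V^j_{k,ml}=\partial^2 V^j_k/\partial u^l\partial u^m$, $g^{ij}_{,k}=\partial g^{ij}/\partial u^k$, etc. The linearization of $F$ is $\ell_F(\varphi)^i = D_t\varphi^i - V^i_{j,k}u^j_x\varphi^k - V^i_jD_x\varphi^j$, where $D_t,D_x$ are total derivatives. The cotangent covering of the system is the system in the variables $u^i$ and new (odd) variables $p_i$: $u^i_t=V^i_ju^j_x$, $p_{i,t}=(V^k_{i,j}-V^k_{j,i})u^j_xp_k+V^k_ip_{k,x}$. The equation $\ell_F(A(\mathbf p))=0$ "on the cotangent covering" means that the expression $\ell_F(A(\mathbf p))$, after replacing $u_t$, $p_t$ and all their $x$-derivatives by means of the cotangent covering system and its differential consequences, vanishes identically as a function of $u,u_x,u_{xx},\dots,p,p_x,p_{xx},\dots$.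 *)

theory Defs
  imports "HOL-Analysis.Analysis"
begin

text \<open>Field variables u = (u^1,...,u^n) are points of type 'n => real ('n a finite index type,
  n = CARD('n) >= 1).  A function of u is h :: ('n => real) => real.\<close>

definition pd :: "(('n \<Rightarrow> real) \<Rightarrow> real) \<Rightarrow> 'n \<Rightarrow> ('n \<Rightarrow> real) \<Rightarrow> real" where
  "pd h k u = deriv (\<lambda>s. h (u(k := s))) (u k)"

fun pds :: "'n list \<Rightarrow> (('n \<Rightarrow> real) \<Rightarrow> real) \<Rightarrow> ('n \<Rightarrow> real) \<Rightarrow> real" where
  "pds [] h = h"
| "pds (k # ks) h = pd (pds ks h) k"

definition smooth_fn :: "('n \<Rightarrow> real) set \<Rightarrow> (('n \<Rightarrow> real) \<Rightarrow> real) \<Rightarrow> bool" where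
  "smooth_fn \<Omega> h \<longleftrightarrow>
     (\<forall>ks. continuous_on \<Omega> (pds ks h) \<and>
       (\<forall>k. \<forall>u\<in>\<Omega>. (\<lambda>s. pds ks h (u(k := s))) differentiable (at (u k))))"

text \<open>Jet space (internal coordinates of the cotangent covering): a point is a pair (a, b)
  with a m i = m-th x-derivative of u^i and b m i = m-th x-derivative of p_i.
  Functions on the jet space depend on finitely many coordinates.\<close>

type_synonym 'n jet = "nat \<Rightarrow> 'n \<Rightarrow> real"
type_synonym 'n jfun = "'n jet \<Rightarrow> 'n jet \<Rightarrow> real"

definition dU :: "'n jfun \<Rightarrow> nat \<Rightarrow> 'n \<Rightarrow> 'n jfun" where
  "dU f m i a b = deriv (\<lambda>s. f (a(m := (a m)(i := s))) b) (a m i)"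

definition dP :: "'n jfun \<Rightarrow> nat \<Rightarrow> 'n \<Rightarrow> 'n jfun" where
  "dP f m i a b = deriv (\<lambda>s. f a (b(m := (b m)(i := s)))) (b m i)"

text \<open>Total x-derivative of a jet function depending on jets of order at most N.\<close>
definition Dx :: "nat \<Rightarrow> 'n::finite jfun \<Rightarrow> 'n jfun" where
  "Dx N f a b = (\<Sum>m\<le>N. \<Sum>i\<in>UNIV. dU f m i a b * a (Suc m) i + dP f m i a b * b (Suc m) i)"

fun Dxn :: "nat \<Rightarrow> nat \<Rightarrow> 'n::finite jfun \<Rightarrow> 'n jfun" where
  "Dxn 0 N f = f"
| "Dxn (Suc k) N f = Dx (N + k) (Dxn k N f)"

text \<open>Right-hand sides of the cotangent covering:
  u^i_t = V^i_j u^j_x,  p_{i,t} = (V^k_{i,j} - V^k_{j,i}) u^j_x p_k + V^k_i p_{k,x}.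
  Here V i j = V^i_j.\<close>
definition Ut :: "('n::finite \<Rightarrow> 'n \<Rightarrow> ('n \<Rightarrow> real) \<Rightarrow> real) \<Rightarrow> 'n \<Rightarrow> 'n jfun" where
  "Ut V i a b = (\<Sum>j\<in>UNIV. V i j (a 0) * a 1 j)"

definition Pt :: "('n::finite \<Rightarrow> 'n \<Rightarrow> ('n \<Rightarrow> real) \<Rightarrow> real) \<Rightarrow> 'n \<Rightarrow> 'n jfun" where
  "Pt V i a b = (\<Sum>k\<in>UNIV. \<Sum>j\<in>UNIV. (pd (V k i) j (a 0) - pd (V k j) i (a 0)) * a 1 j * b 0 k)
              + (\<Sum>k\<in>UNIV. V k i (a 0) * b 1 k)"

definition Dt :: "('n::finite \<Rightarrow> 'n \<Rightarrow> ('n \<Rightarrow> real) \<Rightarrow> real) \<Rightarrow> nat \<Rightarrow> 'n jfun \<Rightarrow> 'n jfun" where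
  "Dt V N f a b = (\<Sum>m\<le>N. \<Sum>i\<in>UNIV.
       dU f m i a b * Dxn m 1 (Ut V i) a b + dP f m i a b * Dxn m 1 (Pt V i) a b)"

text \<open>The operator A(p)^i = g^{ij} p_{j,x} + Gamma^{ij}_k u^k_x p_j  (G i j = g^{ij},
  Gam i j k = Gamma^{ij}_k).\<close>
definition Aop :: "('n::finite \<Rightarrow> 'n \<Rightarrow> ('n \<Rightarrow> real) \<Rightarrow> real) \<Rightarrow> ('n \<Rightarrow> 'n \<Rightarrow> 'n \<Rightarrow> ('n \<Rightarrow> real) \<Rightarrow> real)
    \<Rightarrow> 'n \<Rightarrow> 'n jfun" where
  "Aop G Gam i a b = (\<Sum>j\<in>UNIV. G i j (a 0) * b 1 j)
                   + (\<Sum>j\<in>UNIV. \<Sum>k\<in>UNIV. Gam i j k (a 0) * a 1 k * b 0 j)"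

text \<open>Linearization ell_F(phi)^i = D_t phi^i - V^i_{j,k} u^j_x phi^k - V^i_j D_x phi^j,
  with D_t computed on the cotangent covering; phi = A(p) has order 1.\<close>
definition ellFA :: "('n::finite \<Rightarrow> 'n \<Rightarrow> ('n \<Rightarrow> real) \<Rightarrow> real)
    \<Rightarrow> ('n \<Rightarrow> 'n \<Rightarrow> ('n \<Rightarrow> real) \<Rightarrow> real) \<Rightarrow> ('n \<Rightarrow> 'n \<Rightarrow> 'n \<Rightarrow> ('n \<Rightarrow> real) \<Rightarrow> real)
    \<Rightarrow> 'n \<Rightarrow> 'n jfun" where
  "ellFA V G Gam i a b =
     Dt V 1 (Aop G Gam i) a b
     - (\<Sum>j\<in>UNIV. \<Sum>k\<in>UNIV. pd (V i j) k (a 0) * a 1 j * Aop G Gam k a b)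
     - (\<Sum>j\<in>UNIV. V i j (a 0) * Dx 1 (Aop G Gam j) a b)"

definition gmat :: "('n::finite \<Rightarrow> 'n \<Rightarrow> ('n \<Rightarrow> real) \<Rightarrow> real) \<Rightarrow> ('n \<Rightarrow> real) \<Rightarrow> real^'n^'n" where
  "gmat G u = (\<chi> i j. G i j u)"

definition glow :: "('n::finite \<Rightarrow> 'n \<Rightarrow> ('n \<Rightarrow> real) \<Rightarrow> real) \<Rightarrow> 'n \<Rightarrow> 'n \<Rightarrow> ('n \<Rightarrow> real) \<Rightarrow> real" where
  "glow G i j u = matrix_inv (gmat G u) $ i $ j"

definition Gam_low :: "('n::finite \<Rightarrow> 'n \<Rightarrow> ('n \<Rightarrow> real) \<Rightarrow> real) \<Rightarrow> ('n \<Rightarrow> 'n \<Rightarrow> 'n \<Rightarrow> ('n \<Rightarrow> real) \<Rightarrow> real)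
    \<Rightarrow> 'n \<Rightarrow> 'n \<Rightarrow> 'n \<Rightarrow> ('n \<Rightarrow> real) \<Rightarrow> real" where
  "Gam_low G Gam i j k u = - (\<Sum>s\<in>UNIV. glow G j s u * Gam s i k u)"

end

theory Submission
  imports Defs
begin

text \<open>On the cotangent covering, \<open>\<ell>\<^sub>F(A(p))\<^sup>i\<close> is computed from the partial derivatives
  of \<open>A(p)\<close>, of the covering equations and of their first \<open>x\<close>-derivatives in the jet
  coordinates.  The result is a polynomial in \<open>u\<^sub>x, u\<^sub>x\<^sub>x, p, p\<^sub>x, p\<^sub>x\<^sub>x\<close> whose only monomials
  are \<open>p\<^sub>x\<^sub>x\<close>, \<open>u\<^sub>x p\<^sub>x\<close>, \<open>u\<^sub>x\<^sub>x p\<close> and \<open>u\<^sub>x u\<^sub>x p\<close>, with coefficients depending on \<open>u\<close> only.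
  It vanishes identically iff the first three coefficients vanish and the last one is antisymmetric
  in its two \<open>u\<^sub>x\<close> indices; written out, these are the four systems of the theorem.\<close>

lemma pds_append: "pds (ks @ ls) h = pds ks (pds ls h)"
  by (induction ks) simp_all

lemma smooth_fn_pd:
  assumes "smooth_fn \<Omega> h"
  shows "smooth_fn \<Omega> (pd h k)"
  using assms pds_append[of _ "[k]" h] unfolding smooth_fn_def by (metis pds.simps)

lemma has_real_derivative_jet_base:
  assumes "smooth_fn \<Omega> h" "a 0 \<in> \<Omega>"
  shows "((\<lambda>s. h ((a(m := (a m)(i := s))) 0)) has_real_derivative
           (if m = 0 then pd h i (a 0) else 0)) (at (a m i))"
proof (cases "m = 0")
  case True
  have "(\<lambda>s. h ((a 0)(i := s))) differentiable (at (a 0 i))"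
    using assms pds.simps(1)[of h] unfolding smooth_fn_def by metis
  then show ?thesis
    using True unfolding pd_def by (simp add: DERIV_deriv_iff_real_differentiable)
qed simp

lemma has_real_derivative_jet_coordinate:
  "((\<lambda>s. (a(m := (a m)(i := s))) m' i') has_real_derivative
     (if m' = m \<and> i' = i then 1 else 0)) (at x)"
  by (cases "m' = m"; cases "i' = i") auto

lemma sum_if_const_cond: "(\<Sum>x\<in>A. if P then f x else 0) = (if P then sum f A else 0)"
  by simp

lemmas pull_if_simps =
  if_distrib[where f = "\<lambda>x. x * c" for c] if_distrib[where f = "\<lambda>x. c * x" for c] sum_if_const_cond

text \<open>Backtracking over these rules, interleaved with \<open>sum.cong\<close>, identifies two nested sums
  that differ only in the order of summation.\<close>

lemma sum_bring_to_front:
  "P \<Longrightarrow> P"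
  "(\<Sum>b\<in>B. \<Sum>a\<in>A. f a b) = R \<Longrightarrow> (\<Sum>a\<in>A. \<Sum>b\<in>B. f a b) = R"
  "(\<Sum>c\<in>C. \<Sum>a\<in>A. \<Sum>b\<in>B. g a b c) = R \<Longrightarrow> (\<Sum>a\<in>A. \<Sum>b\<in>B. \<Sum>c\<in>C. g a b c) = R"
  "(\<Sum>d\<in>D. \<Sum>a\<in>A. \<Sum>b\<in>B. \<Sum>c\<in>C. h a b c d) = R \<Longrightarrow>
    (\<Sum>a\<in>A. \<Sum>b\<in>B. \<Sum>c\<in>C. \<Sum>d\<in>D. h a b c d) = R"
  by (assumption, simp only: sum.swap[where B = B], simp only: sum.swap[where B = C],
      simp only: sum.swap[where B = D])

text \<open>The arguments \<open>x, y, p, q, r\<close> stand for \<open>u\<^sub>x, u\<^sub>x\<^sub>x, p, p\<^sub>x, p\<^sub>x\<^sub>x\<close>, i.e. the jet coordinates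
  \<open>a 1, a 2, b 0, b 1, b 2\<close>.\<close>

definition jet_poly ::
    "('n::finite \<Rightarrow> real) \<Rightarrow> ('n \<Rightarrow> 'n \<Rightarrow> real) \<Rightarrow> ('n \<Rightarrow> 'n \<Rightarrow> real) \<Rightarrow> ('n \<Rightarrow> 'n \<Rightarrow> 'n \<Rightarrow> real)
     \<Rightarrow> ('n \<Rightarrow> real) \<Rightarrow> ('n \<Rightarrow> real) \<Rightarrow> ('n \<Rightarrow> real) \<Rightarrow> ('n \<Rightarrow> real) \<Rightarrow> ('n \<Rightarrow> real) \<Rightarrow> real" where
  "jet_poly c1 c2 c3 c4 x y p q r =
     (\<Sum>j\<in>UNIV. c1 j * r j) + (\<Sum>j\<in>UNIV. \<Sum>m\<in>UNIV. c2 j m * x m * q j)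
     + (\<Sum>j\<in>UNIV. \<Sum>m\<in>UNIV. c3 j m * y m * p j)
     + (\<Sum>j\<in>UNIV. \<Sum>m\<in>UNIV. \<Sum>l\<in>UNIV. c4 j m l * x m * x l * p j)"

definition coeff_pxx ::
    "('n::finite \<Rightarrow> 'n \<Rightarrow> ('n \<Rightarrow> real) \<Rightarrow> real) \<Rightarrow> ('n \<Rightarrow> 'n \<Rightarrow> ('n \<Rightarrow> real) \<Rightarrow> real)
     \<Rightarrow> 'n \<Rightarrow> ('n \<Rightarrow> real) \<Rightarrow> 'n \<Rightarrow> real" where
  "coeff_pxx V G i u j = (\<Sum>k\<in>UNIV. G i k u * V j k u) - (\<Sum>k\<in>UNIV. V i k u * G k j u)"

definition coeff_ux_px ::
    "('n::finite \<Rightarrow> 'n \<Rightarrow> ('n \<Rightarrow> real) \<Rightarrow> real) \<Rightarrow> ('n \<Rightarrow> 'n \<Rightarrow> ('n \<Rightarrow> real) \<Rightarrow> real)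
     \<Rightarrow> ('n \<Rightarrow> 'n \<Rightarrow> 'n \<Rightarrow> ('n \<Rightarrow> real) \<Rightarrow> real) \<Rightarrow> 'n \<Rightarrow> ('n \<Rightarrow> real) \<Rightarrow> 'n \<Rightarrow> 'n \<Rightarrow> real" where
  "coeff_ux_px V G Gam i u j m = (\<Sum>k\<in>UNIV.
          pd (G i j) k u * V k m u
        + G i k u * (pd (V j k) m u - pd (V j m) k u)
        + G i k u * pd (V j k) m u
        + Gam i k m u * V j k u
        - pd (V i m) k u * G k j u
        - V i k u * pd (G k j) m u
        - V i k u * Gam k j m u)"

definition coeff_uxx_p ::
    "('n::finite \<Rightarrow> 'n \<Rightarrow> ('n \<Rightarrow> real) \<Rightarrow> real) \<Rightarrow> ('n \<Rightarrow> 'n \<Rightarrow> ('n \<Rightarrow> real) \<Rightarrow> real)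
     \<Rightarrow> ('n \<Rightarrow> 'n \<Rightarrow> 'n \<Rightarrow> ('n \<Rightarrow> real) \<Rightarrow> real) \<Rightarrow> 'n \<Rightarrow> ('n \<Rightarrow> real) \<Rightarrow> 'n \<Rightarrow> 'n \<Rightarrow> real" where
  "coeff_uxx_p V G Gam i u j m = (\<Sum>k\<in>UNIV.
          G i k u * (pd (V j k) m u - pd (V j m) k u)
        + Gam i j k u * V k m u
        - Gam k j m u * V i k u)"

definition coeff_ux_ux_p ::
    "('n::finite \<Rightarrow> 'n \<Rightarrow> ('n \<Rightarrow> real) \<Rightarrow> real) \<Rightarrow> ('n \<Rightarrow> 'n \<Rightarrow> ('n \<Rightarrow> real) \<Rightarrow> real)
     \<Rightarrow> ('n \<Rightarrow> 'n \<Rightarrow> 'n \<Rightarrow> ('n \<Rightarrow> real) \<Rightarrow> real) \<Rightarrow> 'n \<Rightarrow> ('n \<Rightarrow> real) \<Rightarrow> 'n \<Rightarrow> 'n \<Rightarrow> 'n \<Rightarrow> real" where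
  "coeff_ux_ux_p V G Gam i u j m l = (\<Sum>k\<in>UNIV.
          pd (Gam i j m) k u * V k l u
        + Gam i k m u * (pd (V j k) l u - pd (V j l) k u)
        + Gam i j k u * pd (V k m) l u
        + G i k u * (pd (pd (V j k) m) l u - pd (pd (V j m) k) l u)
        - pd (V i m) k u * Gam k j l u
        - V i k u * pd (Gam k j m) l u)"

context
  fixes \<Omega> :: "('n::finite \<Rightarrow> real) set"
    and V G :: "'n \<Rightarrow> 'n \<Rightarrow> ('n \<Rightarrow> real) \<Rightarrow> real"
    and Gam :: "'n \<Rightarrow> 'n \<Rightarrow> 'n \<Rightarrow> ('n \<Rightarrow> real) \<Rightarrow> real"
    and a b :: "'n jet"
  assumes V_smooth: "\<And>i j. smooth_fn \<Omega> (V i j)"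
    and G_smooth: "\<And>i j. smooth_fn \<Omega> (G i j)"
    and Gam_smooth: "\<And>i j k. smooth_fn \<Omega> (Gam i j k)"
    and base: "a 0 \<in> \<Omega>"
begin

lemmas jet_deriv_rules =
  DERIV_add DERIV_diff DERIV_sum DERIV_mult DERIV_const has_real_derivative_jet_coordinate
  has_real_derivative_jet_base[where h = "V i j" and a = a for i j, OF V_smooth base]
  has_real_derivative_jet_base[where h = "G i j" and a = a for i j, OF G_smooth base]
  has_real_derivative_jet_base[where h = "Gam i j k" and a = a for i j k, OF Gam_smooth base]
  has_real_derivative_jet_base[where h = "pd (V i j) l" and a = a for i j l, OF smooth_fn_pd[OF V_smooth] base]

lemma jet_partials:
  "dU (Aop G Gam i) 0 s a b = (\<Sum>j\<in>UNIV. pd (G i j) s (a 0) * b 1 j)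
     + (\<Sum>j\<in>UNIV. \<Sum>k\<in>UNIV. pd (Gam i j k) s (a 0) * a 1 k * b 0 j)"
  "dU (Aop G Gam i) 1 s a b = (\<Sum>j\<in>UNIV. Gam i j s (a 0) * b 0 j)"
  "dP (Aop G Gam i) 0 s a b = (\<Sum>k\<in>UNIV. Gam i s k (a 0) * a 1 k)"
  "dP (Aop G Gam i) 1 s a b = G i s (a 0)"
  "dU (Ut V i) 0 s a b = (\<Sum>j\<in>UNIV. pd (V i j) s (a 0) * a 1 j)"
  "dU (Ut V i) 1 s a b = V i s (a 0)"
  "dP (Ut V i) m s a b = 0"
  "dU (Pt V i) 0 s a b =
     (\<Sum>k\<in>UNIV. \<Sum>j\<in>UNIV. (pd (pd (V k i) j) s (a 0) - pd (pd (V k j) i) s (a 0)) * a 1 j * b 0 k)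
     + (\<Sum>k\<in>UNIV. pd (V k i) s (a 0) * b 1 k)"
  "dU (Pt V i) 1 s a b = (\<Sum>k\<in>UNIV. (pd (V k i) s (a 0) - pd (V k s) i (a 0)) * b 0 k)"
  "dP (Pt V i) 0 s a b = (\<Sum>j\<in>UNIV. (pd (V s i) j (a 0) - pd (V s j) i (a 0)) * a 1 j)"
  "dP (Pt V i) 1 s a b = V s i (a 0)"
  unfolding dU_def dP_def Aop_def Ut_def Pt_def
  by (rule DERIV_imp_deriv[THEN trans], (rule jet_deriv_rules)+,
      simp add: pull_if_simps cong: if_cong)+

lemma ellFA_eq_jet_poly:
  "ellFA V G Gam i a b =
     jet_poly (coeff_pxx V G i (a 0)) (coeff_ux_px V G Gam i (a 0)) (coeff_uxx_p V G Gam i (a 0))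
       (coeff_ux_ux_p V G Gam i (a 0)) (a 1) (a 2) (b 0) (b 1) (b 2)"
proof -
  obtain u x y p q r where jet: "a 0 = u" "a 1 = x" "a 2 = y" "b 0 = p" "b 1 = q" "b 2 = r"
    by blast
  txt \<open>The left-hand sides are, verbatim, the terms produced by the expansion below.\<close>
  have contractions:
    "(\<Sum>s\<in>UNIV. (\<Sum>j\<in>UNIV. pd (G i j) s u * q j) * (\<Sum>l\<in>UNIV. V s l u * x l))
       = (\<Sum>j\<in>UNIV. \<Sum>m\<in>UNIV. (\<Sum>k\<in>UNIV. pd (G i j) k u * V k m u) * x m * q j)"
    "(\<Sum>s\<in>UNIV. (\<Sum>j\<in>UNIV. \<Sum>k\<in>UNIV. pd (Gam i j k) s u * x k * p j) * (\<Sum>l\<in>UNIV. V s l u * x l))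
       = (\<Sum>j\<in>UNIV. \<Sum>m\<in>UNIV. \<Sum>l\<in>UNIV. (\<Sum>k\<in>UNIV. pd (Gam i j m) k u * V k l u) * x m * x l * p j)"
    "(\<Sum>s\<in>UNIV. (\<Sum>k\<in>UNIV. Gam i s k u * x k)
         * (\<Sum>k\<in>UNIV. \<Sum>j\<in>UNIV. (pd (V k s) j u - pd (V k j) s u) * x j * p k))
       = (\<Sum>j\<in>UNIV. \<Sum>m\<in>UNIV. \<Sum>l\<in>UNIV.
            (\<Sum>k\<in>UNIV. Gam i k m u * (pd (V j k) l u - pd (V j l) k u)) * x m * x l * p j)"
    "(\<Sum>s\<in>UNIV. (\<Sum>k\<in>UNIV. Gam i s k u * x k) * (\<Sum>k\<in>UNIV. V k s u * q k))
       = (\<Sum>j\<in>UNIV. \<Sum>m\<in>UNIV. (\<Sum>k\<in>UNIV. Gam i k m u * V j k u) * x m * q j)"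
    "(\<Sum>s\<in>UNIV. (\<Sum>j\<in>UNIV. Gam i j s u * p j) * (\<Sum>t\<in>UNIV. (\<Sum>l\<in>UNIV. pd (V s l) t u * x l) * x t))
       = (\<Sum>j\<in>UNIV. \<Sum>m\<in>UNIV. \<Sum>l\<in>UNIV. (\<Sum>k\<in>UNIV. Gam i j k u * pd (V k m) l u) * x m * x l * p j)"
    "(\<Sum>s\<in>UNIV. (\<Sum>j\<in>UNIV. Gam i j s u * p j) * (\<Sum>t\<in>UNIV. V s t u * y t))
       = (\<Sum>j\<in>UNIV. \<Sum>m\<in>UNIV. (\<Sum>k\<in>UNIV. Gam i j k u * V k m u) * y m * p j)"
    "(\<Sum>s\<in>UNIV. G i s u * (\<Sum>t\<in>UNIV. (\<Sum>k\<in>UNIV. \<Sum>j\<in>UNIV.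
         (pd (pd (V k s) j) t u - pd (pd (V k j) s) t u) * x j * p k) * x t))
       = (\<Sum>j\<in>UNIV. \<Sum>m\<in>UNIV. \<Sum>l\<in>UNIV.
            (\<Sum>k\<in>UNIV. G i k u * (pd (pd (V j k) m) l u - pd (pd (V j m) k) l u)) * x m * x l * p j)"
    "(\<Sum>s\<in>UNIV. G i s u * (\<Sum>t\<in>UNIV. (\<Sum>k\<in>UNIV. pd (V k s) t u * q k) * x t))
       = (\<Sum>j\<in>UNIV. \<Sum>m\<in>UNIV. (\<Sum>k\<in>UNIV. G i k u * pd (V j k) m u) * x m * q j)"
    "(\<Sum>s\<in>UNIV. G i s u * (\<Sum>t\<in>UNIV. (\<Sum>k\<in>UNIV. (pd (V k s) t u - pd (V k t) s u) * p k) * y t))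
       = (\<Sum>j\<in>UNIV. \<Sum>m\<in>UNIV. (\<Sum>k\<in>UNIV. G i k u * (pd (V j k) m u - pd (V j m) k u)) * y m * p j)"
    "(\<Sum>s\<in>UNIV. G i s u * (\<Sum>t\<in>UNIV. (\<Sum>j\<in>UNIV. (pd (V t s) j u - pd (V t j) s u) * x j) * q t))
       = (\<Sum>j\<in>UNIV. \<Sum>m\<in>UNIV. (\<Sum>k\<in>UNIV. G i k u * (pd (V j k) m u - pd (V j m) k u)) * x m * q j)"
    "(\<Sum>s\<in>UNIV. G i s u * (\<Sum>t\<in>UNIV. V t s u * r t))
       = (\<Sum>j\<in>UNIV. (\<Sum>k\<in>UNIV. G i k u * V j k u) * r j)"
    "(\<Sum>j\<in>UNIV. \<Sum>k\<in>UNIV. pd (V i j) k u * x j * (\<Sum>j'\<in>UNIV. G k j' u * q j'))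
       = (\<Sum>j\<in>UNIV. \<Sum>m\<in>UNIV. (\<Sum>k\<in>UNIV. pd (V i m) k u * G k j u) * x m * q j)"
    "(\<Sum>j\<in>UNIV. \<Sum>k\<in>UNIV. pd (V i j) k u * x j * (\<Sum>j'\<in>UNIV. \<Sum>k'\<in>UNIV. Gam k j' k' u * x k' * p j'))
       = (\<Sum>j\<in>UNIV. \<Sum>m\<in>UNIV. \<Sum>l\<in>UNIV. (\<Sum>k\<in>UNIV. pd (V i m) k u * Gam k j l u) * x m * x l * p j)"
    "(\<Sum>j\<in>UNIV. V i j u * (\<Sum>s\<in>UNIV. (\<Sum>j'\<in>UNIV. pd (G j j') s u * q j') * x s))
       = (\<Sum>j\<in>UNIV. \<Sum>m\<in>UNIV. (\<Sum>k\<in>UNIV. V i k u * pd (G k j) m u) * x m * q j)"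
    "(\<Sum>j\<in>UNIV. V i j u * (\<Sum>s\<in>UNIV. (\<Sum>j'\<in>UNIV. \<Sum>k\<in>UNIV. pd (Gam j j' k) s u * x k * p j') * x s))
       = (\<Sum>j\<in>UNIV. \<Sum>m\<in>UNIV. \<Sum>l\<in>UNIV. (\<Sum>k\<in>UNIV. V i k u * pd (Gam k j m) l u) * x m * x l * p j)"
    "(\<Sum>j\<in>UNIV. V i j u * (\<Sum>s\<in>UNIV. (\<Sum>j'\<in>UNIV. Gam j j' s u * p j') * y s))
       = (\<Sum>j\<in>UNIV. \<Sum>m\<in>UNIV. (\<Sum>k\<in>UNIV. Gam k j m u * V i k u) * y m * p j)"
    "(\<Sum>j\<in>UNIV. V i j u * (\<Sum>s\<in>UNIV. (\<Sum>k\<in>UNIV. Gam j s k u * x k) * q s))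
       = (\<Sum>j\<in>UNIV. \<Sum>m\<in>UNIV. (\<Sum>k\<in>UNIV. V i k u * Gam k j m u) * x m * q j)"
    "(\<Sum>j\<in>UNIV. V i j u * (\<Sum>s\<in>UNIV. G j s u * r s))
       = (\<Sum>j\<in>UNIV. (\<Sum>k\<in>UNIV. V i k u * G k j u) * r j)"
    by (unfold sum_distrib_left sum_distrib_right;
        ((rule sum_bring_to_front, rule sum.cong[OF refl])+, simp add: mult_ac))+
  have order_one: "(\<Sum>m\<le>1. f m) = f 0 + f 1" "Dxn 1 N g = Dx N g" for f :: "nat \<Rightarrow> real" and N g
    by (simp_all add: atMost_Suc)
  show ?thesis
    unfolding ellFA_def Dt_def Dx_def order_one Dxn.simps(1) One_nat_def[symmetric] Suc_1
    apply (simp only: jet_partials Aop_def Ut_def Pt_def jet)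
    apply (simp only: sum.distrib distrib_left distrib_right mult_zero_left mult_zero_right add_0 add_0_right
        sum.neutral_const diff_0_right)
    apply (simp only: contractions)
    by (simp only: jet_poly_def coeff_pxx_def coeff_ux_px_def coeff_uxx_p_def coeff_ux_ux_p_def
        sum.distrib sum_subtractf distrib_right left_diff_distrib)
qed

end

lemma antisymmetric_quadratic_form_eq_0:
  fixes c :: "'a \<Rightarrow> 'a \<Rightarrow> real"
  assumes "\<And>m l. c m l + c l m = 0"
  shows "(\<Sum>m\<in>A. \<Sum>l\<in>A. c m l * x m * x l) = 0"
proof -
  have "(\<Sum>m\<in>A. \<Sum>l\<in>A. c m l * x m * x l) = (\<Sum>l\<in>A. \<Sum>m\<in>A. c m l * x m * x l)"
    by (rule sum.swap)
  also have "\<dots> = (\<Sum>l\<in>A. \<Sum>m\<in>A. - (c l m * x l * x m))"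
  proof (intro sum.cong refl)
    fix l m
    have "c m l = - c l m"
      using assms[of m l] by linarith
    then show "c m l * x m * x l = - (c l m * x l * x m)"
      by (simp add: algebra_simps)
  qed
  also have "\<dots> = - (\<Sum>m\<in>A. \<Sum>l\<in>A. c m l * x m * x l)"
    by (simp add: sum_negf)
  finally show ?thesis
    by simp
qed

lemma jet_poly_eq_0_iff:
  "(\<forall>x y p q r. jet_poly c1 c2 c3 c4 x y p q r = 0) \<longleftrightarrow>
     (\<forall>j. c1 j = 0) \<and> (\<forall>j m. c2 j m = 0) \<and> (\<forall>j m. c3 j m = 0) \<and> (\<forall>j m l. c4 j m l + c4 j l m = 0)"
proof
  assume vanish: "\<forall>x y p q r. jet_poly c1 c2 c3 c4 x y p q r = 0"
  define e :: "'a \<Rightarrow> 'a \<Rightarrow> real" where "e k t = (if t = k then 1 else 0)" for k t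
  note eval = jet_poly_def e_def pull_if_simps distrib_left distrib_right sum.distrib
  have "c4 j m m + c4 j m l + c4 j l m + c4 j l l = 0" "c4 j m m = 0" "c4 j l l = 0" for j m l
    using vanish[rule_format, of "\<lambda>t. e m t + e l t" "\<lambda>_. 0" "e j" "\<lambda>_. 0" "\<lambda>_. 0"]
      vanish[rule_format, of "e m" "\<lambda>_. 0" "e j" "\<lambda>_. 0" "\<lambda>_. 0"]
      vanish[rule_format, of "e l" "\<lambda>_. 0" "e j" "\<lambda>_. 0" "\<lambda>_. 0"]
    by (simp_all add: eval add.assoc cong: if_cong)
  then show "(\<forall>j. c1 j = 0) \<and> (\<forall>j m. c2 j m = 0) \<and> (\<forall>j m. c3 j m = 0) \<and> (\<forall>j m l. c4 j m l + c4 j l m = 0)"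
    using vanish[rule_format, of "\<lambda>_. 0" "\<lambda>_. 0" "\<lambda>_. 0" "\<lambda>_. 0" "e j" for j]
      vanish[rule_format, of "e m" "\<lambda>_. 0" "\<lambda>_. 0" "e j" "\<lambda>_. 0" for j m]
      vanish[rule_format, of "\<lambda>_. 0" "e m" "e j" "\<lambda>_. 0" "\<lambda>_. 0" for j m]
    by (simp add: eval cong: if_cong)
next
  assume "(\<forall>j. c1 j = 0) \<and> (\<forall>j m. c2 j m = 0) \<and> (\<forall>j m. c3 j m = 0) \<and> (\<forall>j m l. c4 j m l + c4 j l m = 0)"
  then show "\<forall>x y p q r. jet_poly c1 c2 c3 c4 x y p q r = 0"
    by (simp add: jet_poly_def antisymmetric_quadratic_form_eq_0 flip: sum_distrib_right)
qed

lemma ellFA_vanishes_iff: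
  fixes \<Omega> :: "('n::finite \<Rightarrow> real) set"
  assumes V_smooth: "\<And>i j. smooth_fn \<Omega> (V i j)"
    and G_smooth: "\<And>i j. smooth_fn \<Omega> (G i j)"
    and Gam_smooth: "\<And>i j k. smooth_fn \<Omega> (Gam i j k)"
  shows "(\<forall>a b i. a 0 \<in> \<Omega> \<longrightarrow> ellFA V G Gam i a b = 0) \<longleftrightarrow>
    (\<forall>u\<in>\<Omega>. \<forall>i x y p q r. jet_poly (coeff_pxx V G i u) (coeff_ux_px V G Gam i u)
       (coeff_uxx_p V G Gam i u) (coeff_ux_ux_p V G Gam i u) x y p q r = 0)"
  (is "?lhs \<longleftrightarrow> ?rhs")
proof
  note expansion = ellFA_eq_jet_poly[OF V_smooth G_smooth Gam_smooth]
  show "?lhs \<Longrightarrow> ?rhs"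
  proof (intro ballI allI)
    fix u x y p q r :: "'n \<Rightarrow> real" and i
    assume "?lhs" and "u \<in> \<Omega>"
    let ?a = "\<lambda>n::nat. if n = 0 then u else if n = 1 then x else y"
    let ?b = "\<lambda>n::nat. if n = 0 then p else if n = 1 then q else r"
    have "ellFA V G Gam i ?a ?b = 0"
      using \<open>?lhs\<close> \<open>u \<in> \<Omega>\<close> by simp
    with \<open>u \<in> \<Omega>\<close> show "jet_poly (coeff_pxx V G i u) (coeff_ux_px V G Gam i u)
       (coeff_uxx_p V G Gam i u) (coeff_ux_ux_p V G Gam i u) x y p q r = 0"
      using expansion[of ?a] by simp
  qed
  show "?rhs \<Longrightarrow> ?lhs"
    using expansion by simp
qed

lemma coeff_pxx_symmetric_eq:
  assumes "\<And>i j. G i j u = G j i u"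
  shows "coeff_pxx V G i u j = (\<Sum>k\<in>UNIV. V j k u * G k i u) - (\<Sum>k\<in>UNIV. V i k u * G k j u)"
  unfolding coeff_pxx_def using assms by (simp add: mult.commute)

lemma coeff_ux_ux_p_symmetrized:
  "coeff_ux_ux_p V G Gam i u j m l + coeff_ux_ux_p V G Gam i u j l m = (\<Sum>k\<in>UNIV.
          G i k u * (pd (pd (V j k) m) l u + pd (pd (V j k) l) m u
                     - pd (pd (V j m) k) l u - pd (pd (V j l) k) m u)
        + pd (Gam i j m) k u * V k l u + pd (Gam i j l) k u * V k m u
        + Gam i j k u * pd (V k l) m u + Gam i j k u * pd (V k m) l u
        + Gam i k l u * pd (V j k) m u + Gam i k m u * pd (V j k) l u
        - Gam i k l u * pd (V j m) k u - Gam i k m u * pd (V j l) k u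
        - Gam k j m u * pd (V i l) k u - Gam k j l u * pd (V i m) k u
        - pd (Gam k j m) l u * V i k u - pd (Gam k j l) m u * V i k u)"
  unfolding coeff_ux_ux_p_def by (simp add: sum.distrib sum_subtractf algebra_simps)

theorem mainTheorem1:
  fixes \<Omega> :: "('n::finite \<Rightarrow> real) set"
    and V :: "'n \<Rightarrow> 'n \<Rightarrow> ('n \<Rightarrow> real) \<Rightarrow> real"
    and G :: "'n \<Rightarrow> 'n \<Rightarrow> ('n \<Rightarrow> real) \<Rightarrow> real"
    and Gam :: "'n \<Rightarrow> 'n \<Rightarrow> 'n \<Rightarrow> ('n \<Rightarrow> real) \<Rightarrow> real"
  assumes \<Omega>_open: "open \<Omega>"
    and V_smooth: "\<And>i j. smooth_fn \<Omega> (V i j)"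
    and G_smooth: "\<And>i j. smooth_fn \<Omega> (G i j)"
    and Gam_smooth: "\<And>i j k. smooth_fn \<Omega> (Gam i j k)"
    and nondeg: "\<And>u. u \<in> \<Omega> \<Longrightarrow> det (gmat G u) \<noteq> 0"
    and ham1: "\<And>u i j. u \<in> \<Omega> \<Longrightarrow> G i j u = G j i u"
    and ham2: "\<And>u i j k. u \<in> \<Omega> \<Longrightarrow> pd (G i j) k u = Gam i j k u + Gam j i k u"
    and ham3: "\<And>u i j l. u \<in> \<Omega> \<Longrightarrow>
        (\<Sum>k\<in>UNIV. G i k u * Gam j l k u) = (\<Sum>k\<in>UNIV. G j k u * Gam i l k u)"
    and ham4: "\<And>u i j k l. u \<in> \<Omega> \<Longrightarrow>
        pd (Gam i j l) k u - pd (Gam i j k) l u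
        + (\<Sum>s\<in>UNIV. Gam_low G Gam i k s u * Gam s j l u)
        - (\<Sum>s\<in>UNIV. Gam_low G Gam j k s u * Gam s i l u) = 0"
  shows "(\<forall>a b i. a 0 \<in> \<Omega> \<longrightarrow> ellFA V G Gam i a b = 0) \<longleftrightarrow>
    (\<forall>u\<in>\<Omega>.
      (\<forall>i j. (\<Sum>k\<in>UNIV. V i k u * G k j u) - (\<Sum>k\<in>UNIV. V j k u * G k i u) = 0)
    \<and> (\<forall>i j m. (\<Sum>k\<in>UNIV.
          pd (G i j) k u * V k m u
        + G i k u * (pd (V j k) m u - pd (V j m) k u)
        + G i k u * pd (V j k) m u
        + Gam i k m u * V j k u
        - pd (V i m) k u * G k j u
        - V i k u * pd (G k j) m u
        - V i k u * Gam k j m u) = 0)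
    \<and> (\<forall>i j h. (\<Sum>k\<in>UNIV.
          G i k u * (pd (V j k) h u - pd (V j h) k u)
        + Gam i j k u * V k h u
        - Gam k j h u * V i k u) = 0)
    \<and> (\<forall>i j m l. (\<Sum>k\<in>UNIV.
          G i k u * (pd (pd (V j k) m) l u + pd (pd (V j k) l) m u
                     - pd (pd (V j m) k) l u - pd (pd (V j l) k) m u)
        + pd (Gam i j m) k u * V k l u + pd (Gam i j l) k u * V k m u
        + Gam i j k u * pd (V k l) m u + Gam i j k u * pd (V k m) l u
        + Gam i k l u * pd (V j k) m u + Gam i k m u * pd (V j k) l u
        - Gam i k l u * pd (V j m) k u - Gam i k m u * pd (V j l) k u
        - Gam k j m u * pd (V i l) k u - Gam k j l u * pd (V i m) k u
        - pd (Gam k j m) l u * V i k u - pd (Gam k j l) m u * V i k u) = 0))"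
proof -
  have "(\<forall>a b i. a 0 \<in> \<Omega> \<longrightarrow> ellFA V G Gam i a b = 0) \<longleftrightarrow>
      (\<forall>u\<in>\<Omega>. \<forall>i. (\<forall>j. coeff_pxx V G i u j = 0) \<and> (\<forall>j m. coeff_ux_px V G Gam i u j m = 0)
        \<and> (\<forall>j m. coeff_uxx_p V G Gam i u j m = 0)
        \<and> (\<forall>j m l. coeff_ux_ux_p V G Gam i u j m l + coeff_ux_ux_p V G Gam i u j l m = 0))"
    by (simp only: ellFA_vanishes_iff[OF V_smooth G_smooth Gam_smooth] jet_poly_eq_0_iff)
  then show ?thesis
    unfolding coeff_ux_px_def coeff_uxx_p_def coeff_ux_ux_p_symmetrized
    by (auto simp: coeff_pxx_symmetric_eq ham1)
qed

end
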